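(* Let $a,b,c\in\mathbb{R}$, $\lambda>0$, and consider the scalar linear jump-diffusion test equation $$dX(t)=aX(t^-)\,dt+bX(t^-)\,dW(t)+cX(t^-)\,dN(t),\qquad X(0)=X_0,$$ with $\mathbb{E}|X_0|^2<\infty$. Let $l:=2a+b^2+\lambda c(2+c)$ and assume $l<0$. Consider the (non-compensated) tamed Euler scheme applied to this equation, $$X_{n+1}=X_n+\frac{aX_n\Delta t}{1+\Delta t|aX_n|}+bX_n\Delta W_n+cX_n\Delta N_n,\qquad X_0 \text{ given}.$$ This scheme is mean-square stable (i.e. $\lim_{n\to\infty}\mathbb{E}(X_n^2)=0$) if one of the following conditions holds: (i) $a(1+\lambda c\Delta t)\le 0$, $2a-l>0$ and $\Delta t<\dfrac{2a-l}{a^2+\lambda^2c^2}$; (ii) $a(1+\lambda c\Delta t)>0$ and $\Delta t<\dfrac{-l}{(a+\lambda c)^2}$.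
   Context: $(\Omega,\mathcal F,\mathbb P)$ is a complete probability space with filtration $(\mathcal F_t)_{t\ge0}$; $W$ is a one-dimensional standard Brownian motion and $N$ is a Poisson process with intensity $\lambda$, independent of $W$ (and of $X_0$). $\Delta t>0$ is the step size, $t_n=n\Delta t$, $\Delta W_n=W(t_{n+1})-W(t_n)$, $\Delta N_n=N(t_{n+1})-N(t_n)$. The condition $l<0$ is equivalent to mean-square stability of the exact solution. *)

theory Defs
  imports "HOL-Probability.Probability"
begin

definition std_brownian_motion :: "'a measure \<Rightarrow> (real \<Rightarrow> 'a \<Rightarrow> real) \<Rightarrow> bool" where
  "std_brownian_motion M W \<longleftrightarrow>
     (\<forall>t\<ge>0. W t \<in> borel_measurable M) \<and>
     (AE \<omega> in M. W 0 \<omega> = 0) \<and>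
     (AE \<omega> in M. continuous_on {0..} (\<lambda>t. W t \<omega>)) \<and>
     (\<forall>s t. 0 \<le> s \<and> s < t \<longrightarrow>
        distributed M lborel (\<lambda>\<omega>. W t \<omega> - W s \<omega>) (normal_density 0 (sqrt (t - s))))"

definition poisson_process :: "'a measure \<Rightarrow> real \<Rightarrow> (real \<Rightarrow> 'a \<Rightarrow> real) \<Rightarrow> bool" where
  "poisson_process M lam N \<longleftrightarrow>
     (\<forall>t\<ge>0. N t \<in> borel_measurable M) \<and>
     (AE \<omega> in M. N 0 \<omega> = 0) \<and>
     (AE \<omega> in M. mono_on {0..} (\<lambda>t. N t \<omega>) \<and>
                  (\<forall>t\<ge>0. continuous (at_right t) (\<lambda>t. N t \<omega>))) \<and>
     (\<forall>s t. 0 \<le> s \<and> s < t \<longrightarrow>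
        distr M borel (\<lambda>\<omega>. N t \<omega> - N s \<omega>)
          = distr (measure_pmf (poisson_pmf (lam * (t - s)))) borel real)"

text \<open>This encodes independent
  increments of W and N and independence of W, N and X0.\<close>
definition indep_X0_W_N ::
  "'a measure \<Rightarrow> ('a \<Rightarrow> real) \<Rightarrow> (real \<Rightarrow> 'a \<Rightarrow> real) \<Rightarrow> (real \<Rightarrow> 'a \<Rightarrow> real) \<Rightarrow> bool" where
  "indep_X0_W_N M X0 W N \<longleftrightarrow>
     (\<forall>ts :: real list. sorted ts \<and> distinct ts \<and> (\<forall>t\<in>set ts. 0 \<le> t) \<longrightarrow>
        prob_space.indep_vars M (\<lambda>_. borel)
          (\<lambda>i. case i of None \<Rightarrow> X0
                | Some (False, k) \<Rightarrow> (\<lambda>\<omega>. W (ts ! Suc k) \<omega> - W (ts ! k) \<omega>)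
                | Some (True, k) \<Rightarrow> (\<lambda>\<omega>. N (ts ! Suc k) \<omega> - N (ts ! k) \<omega>))
          (insert None {Some (b, k) | b k. Suc k < length ts}))"

fun tamed_euler ::
  "real \<Rightarrow> real \<Rightarrow> real \<Rightarrow> real \<Rightarrow> ('a \<Rightarrow> real) \<Rightarrow> (real \<Rightarrow> 'a \<Rightarrow> real) \<Rightarrow> (real \<Rightarrow> 'a \<Rightarrow> real)
   \<Rightarrow> nat \<Rightarrow> 'a \<Rightarrow> real" where
  "tamed_euler a b c dt X0 W N 0 \<omega> = X0 \<omega>"
| "tamed_euler a b c dt X0 W N (Suc n) \<omega> =
     (let x = tamed_euler a b c dt X0 W N n \<omega>;
          dW = W (real (Suc n) * dt) \<omega> - W (real n * dt) \<omega>;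
          dN = N (real (Suc n) * dt) \<omega> - N (real n * dt) \<omega>
      in x + a * x * dt / (1 + dt * \<bar>a * x\<bar>) + b * x * dW + c * x * dN)"

end

theory Submission
  imports Defs
begin

text \<open>Write \<open>\<theta>\<^sub>n = a \<Delta>t / (1 + \<Delta>t \<bar>a X\<^sub>n\<bar>)\<close>. One step of the scheme multiplies
  \<open>X\<^sub>n\<close> by \<open>1 + \<theta>\<^sub>n + b \<Delta>W\<^sub>n + c \<Delta>N\<^sub>n\<close>, and \<open>X\<^sub>n\<close> is independent of the increments
  \<open>\<Delta>W\<^sub>n \<sim> N(0, \<Delta>t)\<close> and \<open>\<Delta>N\<^sub>n \<sim> Poisson(\<lambda>\<Delta>t)\<close>. Taking expectations gives
  \<open>E X\<^sub>n\<^sub>+\<^sub>1\<^sup>2 = E[X\<^sub>n\<^sup>2 R(\<theta>\<^sub>n)]\<close> with \<open>R(\<theta>) = (1 + \<theta> + c\<lambda>\<Delta>t)\<^sup>2 + b\<^sup>2\<Delta>t + c\<^sup>2\<lambda>\<Delta>t\<close>.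
  The taming factor puts \<open>\<theta>\<^sub>n\<close> between \<open>0\<close> and \<open>a\<Delta>t\<close>, so by convexity
  \<open>R(\<theta>\<^sub>n) \<le> max (R 0) (R (a\<Delta>t))\<close>; each of the two step-size conditions makes both values
  smaller than \<open>1\<close>, hence \<open>E X\<^sub>n\<^sup>2\<close> decays geometrically.\<close>

lemma poisson_pmf_Suc_mult:
  assumes "r > 0"
  shows "pmf (poisson_pmf r) (Suc n) * real (Suc n) = r * pmf (poisson_pmf r) n"
proof -
  have "fact (Suc n) = real (Suc n) * fact n" by (simp add: fact_Suc)
  then show ?thesis using assms by (simp del: of_nat_Suc fact_Suc)
qed

lemma sums_poisson_pmf:
  assumes "r > 0"
  shows "(\<lambda>k. pmf (poisson_pmf r) k) sums 1"
proof -
  have "(\<lambda>k. r ^ k / fact k) sums exp r"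
    using exp_converges[of r] by (simp add: divide_inverse mult.commute)
  then have "(\<lambda>k. r ^ k / fact k * exp (-r)) sums (exp r * exp (-r))"
    by (rule sums_mult2)
  then show ?thesis using assms by (simp add: exp_minus)
qed

lemma sums_poisson_pmf_mult_of_nat:
  assumes r: "r > 0"
  shows "(\<lambda>k. pmf (poisson_pmf r) k * real k) sums r"
proof -
  have "(\<lambda>k. r * pmf (poisson_pmf r) k) sums (r * 1)"
    by (rule sums_mult[OF sums_poisson_pmf[OF r]])
  then have "(\<lambda>k. pmf (poisson_pmf r) (Suc k) * real (Suc k)) sums r"
    by (simp add: poisson_pmf_Suc_mult[OF r] del: of_nat_Suc)
  then show ?thesis by (subst (asm) sums_Suc_iff) simp
qed

lemma sums_poisson_pmf_mult_square:
  assumes r: "r > 0"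
  shows "(\<lambda>k. pmf (poisson_pmf r) k * (real k)\<^sup>2) sums (r + r\<^sup>2)"
proof -
  have "(\<lambda>k. r * (pmf (poisson_pmf r) k * real k) + r * pmf (poisson_pmf r) k) sums (r * r + r * 1)"
    by (intro sums_add sums_mult sums_poisson_pmf_mult_of_nat sums_poisson_pmf r)
  moreover have "pmf (poisson_pmf r) (Suc k) * (real (Suc k))\<^sup>2
      = r * (pmf (poisson_pmf r) k * real k) + r * pmf (poisson_pmf r) k" for k
    unfolding power2_eq_square mult.assoc[symmetric] poisson_pmf_Suc_mult[OF r]
    by (simp add: algebra_simps)
  ultimately have "(\<lambda>k. pmf (poisson_pmf r) (Suc k) * (real (Suc k))\<^sup>2) sums (r + r\<^sup>2)"
    by (simp add: power2_eq_square add.commute)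
  then show ?thesis by (subst (asm) sums_Suc_iff) simp
qed

lemma integrable_integral_measure_pmf_nat_sums:
  fixes f :: "nat \<Rightarrow> real"
  assumes nonneg: "\<And>k. f k \<ge> 0" and sums: "(\<lambda>k. pmf p k * f k) sums S"
  shows "integrable (measure_pmf p) f" "integral\<^sup>L (measure_pmf p) f = S"
proof -
  have int: "integrable (count_space UNIV) (\<lambda>k. pmf p k * f k)"
    unfolding integrable_count_space_nat_iff using sums nonneg
    by (simp add: sums_summable abs_mult)
  show "integrable (measure_pmf p) f"
    unfolding measure_pmf_eq_density using int by (subst integrable_density) auto
  show "integral\<^sup>L (measure_pmf p) f = S"
    unfolding measure_pmf_eq_density
    by (subst integral_density) (auto simp: integral_count_space_nat[OF int] sums_unique[OF sums])
qed

lemma (in prob_space) poisson_moments: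
  fixes V :: "'a \<Rightarrow> real"
  assumes r: "r > 0" and [measurable]: "V \<in> borel_measurable M"
    and distr_V: "distr M borel V = distr (measure_pmf (poisson_pmf r)) borel real"
  shows "integrable M V" "expectation V = r"
    and "integrable M (\<lambda>\<omega>. (V \<omega>)\<^sup>2)" "expectation (\<lambda>\<omega>. (V \<omega>)\<^sup>2) = r + r\<^sup>2"
proof -
  let ?P = "measure_pmf (poisson_pmf r)"
  have integral_eq: "expectation (\<lambda>\<omega>. f (V \<omega>)) = integral\<^sup>L ?P (\<lambda>k. f (real k))"
    and integrable_iff: "integrable M (\<lambda>\<omega>. f (V \<omega>)) \<longleftrightarrow> integrable ?P (\<lambda>k. f (real k))"
    if [measurable]: "f \<in> borel_measurable borel" for f :: "real \<Rightarrow> real"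
    using integral_distr[of V M borel f] integral_distr[of real ?P borel f]
      integrable_distr_eq[of V M borel f] integrable_distr_eq[of real ?P borel f]
    by (simp_all add: distr_V)
  note first = integrable_integral_measure_pmf_nat_sums[of "\<lambda>k. real k", OF _ sums_poisson_pmf_mult_of_nat[OF r]]
  note second = integrable_integral_measure_pmf_nat_sums[of "\<lambda>k. (real k)\<^sup>2", OF _ sums_poisson_pmf_mult_square[OF r]]
  show "integrable M V" "expectation V = r"
    using integrable_iff[of "\<lambda>x. x"] integral_eq[of "\<lambda>x. x"] first by simp_all
  show "integrable M (\<lambda>\<omega>. (V \<omega>)\<^sup>2)" "expectation (\<lambda>\<omega>. (V \<omega>)\<^sup>2) = r + r\<^sup>2"
    using integrable_iff[of "\<lambda>x. x\<^sup>2"] integral_eq[of "\<lambda>x. x\<^sup>2"] second by simp_all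
qed

lemma (in prob_space) centered_normal_moments:
  fixes U :: "'a \<Rightarrow> real"
  assumes \<sigma>: "\<sigma> > 0" and U: "distributed M lborel U (normal_density 0 \<sigma>)"
  shows "integrable M U" "expectation U = 0"
    and "integrable M (\<lambda>\<omega>. (U \<omega>)\<^sup>2)" "expectation (\<lambda>\<omega>. (U \<omega>)\<^sup>2) = \<sigma>\<^sup>2"
proof -
  have "integrable lborel (\<lambda>x. normal_density 0 \<sigma> x * x)"
    using integrable_normal_moment_nz_1[OF \<sigma>] .
  then show "integrable M U"
    using distributed_integrable[OF U, of "\<lambda>x. x"] by simp
  have "integral\<^sup>L lborel (\<lambda>x. normal_density 0 \<sigma> x * x) = 0"
    using integral_normal_moment_nz_1[OF \<sigma>] .
  then show "expectation U = 0"
    using distributed_integral[OF U, of "\<lambda>x. x"] by simp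
  have "integrable lborel (\<lambda>x. normal_density 0 \<sigma> x * x\<^sup>2)"
    using integrable_normal_moment[OF \<sigma>, of 0 2] by simp
  then show "integrable M (\<lambda>\<omega>. (U \<omega>)\<^sup>2)"
    using distributed_integrable[OF U, of "\<lambda>x. x\<^sup>2"] by simp
  have "integral\<^sup>L lborel (\<lambda>x. normal_density 0 \<sigma> x * x\<^sup>2) = \<sigma>\<^sup>2"
    using integral_normal_moment_even[OF \<sigma>, of 0 1] \<sigma> by simp
  then show "expectation (\<lambda>\<omega>. (U \<omega>)\<^sup>2) = \<sigma>\<^sup>2"
    using distributed_integral[OF U, of "\<lambda>x. x\<^sup>2"] by simp
qed

lemma (in prob_space) moments_lincomb_indep:
  fixes U V :: "'a \<Rightarrow> real"
  assumes indep: "indep_var borel U borel V"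
    and U1: "integrable M U" and U2: "integrable M (\<lambda>\<omega>. (U \<omega>)\<^sup>2)" and EU: "expectation U = 0"
    and V1: "integrable M V" and V2: "integrable M (\<lambda>\<omega>. (V \<omega>)\<^sup>2)"
  shows "integrable M (\<lambda>\<omega>. b * U \<omega> + c * V \<omega>)"
    and "expectation (\<lambda>\<omega>. b * U \<omega> + c * V \<omega>) = c * expectation V"
    and "integrable M (\<lambda>\<omega>. (b * U \<omega> + c * V \<omega>)\<^sup>2)"
    and "expectation (\<lambda>\<omega>. (b * U \<omega> + c * V \<omega>)\<^sup>2)
      = b\<^sup>2 * expectation (\<lambda>\<omega>. (U \<omega>)\<^sup>2) + c\<^sup>2 * expectation (\<lambda>\<omega>. (V \<omega>)\<^sup>2)"
proof -
  have UV: "integrable M (\<lambda>\<omega>. U \<omega> * V \<omega>)" "expectation (\<lambda>\<omega>. U \<omega> * V \<omega>) = 0"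
    using indep_var_integrable[OF indep U1 V1] indep_var_lebesgue_integral[OF indep U1 V1] EU
    by simp_all
  have expand: "(b * U \<omega> + c * V \<omega>)\<^sup>2 = b\<^sup>2 * (U \<omega>)\<^sup>2 + (2 * b * c) * (U \<omega> * V \<omega>) + c\<^sup>2 * (V \<omega>)\<^sup>2"
    for \<omega>
    by (simp add: power2_eq_square algebra_simps)
  show "integrable M (\<lambda>\<omega>. b * U \<omega> + c * V \<omega>)"
    "expectation (\<lambda>\<omega>. b * U \<omega> + c * V \<omega>) = c * expectation V"
    using U1 V1 EU by simp_all
  show "integrable M (\<lambda>\<omega>. (b * U \<omega> + c * V \<omega>)\<^sup>2)"
    "expectation (\<lambda>\<omega>. (b * U \<omega> + c * V \<omega>)\<^sup>2)
      = b\<^sup>2 * expectation (\<lambda>\<omega>. (U \<omega>)\<^sup>2) + c\<^sup>2 * expectation (\<lambda>\<omega>. (V \<omega>)\<^sup>2)"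
    unfolding expand using U2 V2 UV by simp_all
qed

lemma (in prob_space) second_moment_mult_indep:
  fixes X Z :: "'a \<Rightarrow> real" and g :: "real \<Rightarrow> real"
  assumes indep: "indep_var borel X borel Z"
    and [measurable]: "g \<in> borel_measurable borel" and g_bound: "\<And>x. \<bar>g x\<bar> \<le> B"
    and X2: "integrable M (\<lambda>\<omega>. (X \<omega>)\<^sup>2)"
    and Z1: "integrable M Z" and Z2: "integrable M (\<lambda>\<omega>. (Z \<omega>)\<^sup>2)"
  shows "integrable M (\<lambda>\<omega>. (X \<omega> * (g (X \<omega>) + Z \<omega>))\<^sup>2)"
    and "expectation (\<lambda>\<omega>. (X \<omega> * (g (X \<omega>) + Z \<omega>))\<^sup>2) =
      expectation (\<lambda>\<omega>. (X \<omega>)\<^sup>2 * ((g (X \<omega>))\<^sup>2 + 2 * g (X \<omega>) * expectation Z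
        + expectation (\<lambda>\<omega>. (Z \<omega>)\<^sup>2)))"
proof -
  have [measurable]: "X \<in> borel_measurable M" "Z \<in> borel_measurable M"
    using indep_var_rv1[OF indep] indep_var_rv2[OF indep] by simp_all
  have B: "0 \<le> B" using g_bound[of 0] by linarith
  have integrable_bounded: "integrable M (\<lambda>\<omega>. (X \<omega>)\<^sup>2 * f (X \<omega>))"
    if [measurable]: "f \<in> borel_measurable borel" and f: "\<And>x. \<bar>f x\<bar> \<le> K" for f K
  proof (rule Bochner_Integration.integrable_bound[OF integrable_mult_left[OF X2, of K]])
    show "AE \<omega> in M. norm ((X \<omega>)\<^sup>2 * f (X \<omega>)) \<le> norm ((X \<omega>)\<^sup>2 * K)"
      using f by (intro AE_I2) (simp add: abs_mult mult_left_mono order_trans[OF _ abs_ge_self])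
  qed measurable
  have indep_comp: "indep_var borel (\<lambda>\<omega>. \<phi> (X \<omega>)) borel (\<lambda>\<omega>. \<psi> (Z \<omega>))"
    if "\<phi> \<in> borel_measurable borel" "\<psi> \<in> borel_measurable borel" for \<phi> \<psi> :: "real \<Rightarrow> real"
    using indep_var_compose[OF indep that] by (simp add: comp_def)
  define A where "A \<omega> = (X \<omega>)\<^sup>2 * (g (X \<omega>))\<^sup>2" for \<omega>
  define G where "G \<omega> = (X \<omega>)\<^sup>2 * g (X \<omega>)" for \<omega>
  have A: "integrable M A"
    unfolding A_def using g_bound B
    by (intro integrable_bounded[of _ "B\<^sup>2"])
      (auto simp: abs_le_square_iff intro: order_trans[OF _ abs_ge_self] abs_le_square_iff[THEN iffD1])
  have G: "integrable M G"
    unfolding G_def using g_bound by (intro integrable_bounded) auto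
  have GZ: "indep_var borel G borel Z"
  proof -
    have "indep_var borel (\<lambda>\<omega>. (\<lambda>x. x\<^sup>2 * g x) (X \<omega>)) borel (\<lambda>\<omega>. (\<lambda>z. z) (Z \<omega>))"
      by (rule indep_comp) measurable
    then show ?thesis unfolding G_def by (simp only:)
  qed
  have XZ2: "indep_var borel (\<lambda>\<omega>. (X \<omega>)\<^sup>2) borel (\<lambda>\<omega>. (Z \<omega>)\<^sup>2)"
    by (rule indep_comp) measurable
  have GZ_int: "integrable M (\<lambda>\<omega>. G \<omega> * Z \<omega>)"
    and XZ2_int: "integrable M (\<lambda>\<omega>. (X \<omega>)\<^sup>2 * (Z \<omega>)\<^sup>2)"
    using indep_var_integrable[OF GZ G Z1] indep_var_integrable[OF XZ2 X2 Z2] .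
  have expand: "(X \<omega> * (g (X \<omega>) + Z \<omega>))\<^sup>2 = A \<omega> + 2 * (G \<omega> * Z \<omega>) + (X \<omega>)\<^sup>2 * (Z \<omega>)\<^sup>2" for \<omega>
    unfolding A_def G_def by (simp add: power2_eq_square algebra_simps)
  show "integrable M (\<lambda>\<omega>. (X \<omega> * (g (X \<omega>) + Z \<omega>))\<^sup>2)"
    unfolding expand using A GZ_int XZ2_int by simp
  have "expectation (\<lambda>\<omega>. (X \<omega> * (g (X \<omega>) + Z \<omega>))\<^sup>2)
      = expectation A + 2 * expectation (\<lambda>\<omega>. G \<omega> * Z \<omega>) + expectation (\<lambda>\<omega>. (X \<omega>)\<^sup>2 * (Z \<omega>)\<^sup>2)"
    unfolding expand using A GZ_int XZ2_int by simp
  also have "\<dots> = expectation A + 2 * expectation Z * expectation G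
      + expectation (\<lambda>\<omega>. (Z \<omega>)\<^sup>2) * expectation (\<lambda>\<omega>. (X \<omega>)\<^sup>2)"
    unfolding indep_var_lebesgue_integral[OF GZ G Z1] indep_var_lebesgue_integral[OF XZ2 X2 Z2]
    by simp
  also have "\<dots> = expectation (\<lambda>\<omega>. A \<omega> + (2 * expectation Z) * G \<omega>
      + expectation (\<lambda>\<omega>. (Z \<omega>)\<^sup>2) * (X \<omega>)\<^sup>2)"
    using A G X2 by (simp add: Bochner_Integration.integral_add)
  also have "\<dots> = expectation (\<lambda>\<omega>. (X \<omega>)\<^sup>2 * ((g (X \<omega>))\<^sup>2 + 2 * g (X \<omega>) * expectation Z
      + expectation (\<lambda>\<omega>. (Z \<omega>)\<^sup>2)))"
    unfolding A_def G_def by (rule Bochner_Integration.integral_cong) (simp_all add: algebra_simps)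
  finally show "expectation (\<lambda>\<omega>. (X \<omega> * (g (X \<omega>) + Z \<omega>))\<^sup>2) =
      expectation (\<lambda>\<omega>. (X \<omega>)\<^sup>2 * ((g (X \<omega>))\<^sup>2 + 2 * g (X \<omega>) * expectation Z
        + expectation (\<lambda>\<omega>. (Z \<omega>)\<^sup>2)))" .
qed

definition euler_input ::
  "('a \<Rightarrow> real) \<Rightarrow> (real \<Rightarrow> 'a \<Rightarrow> real) \<Rightarrow> (real \<Rightarrow> 'a \<Rightarrow> real) \<Rightarrow> real
   \<Rightarrow> (bool \<times> nat) option \<Rightarrow> 'a \<Rightarrow> real" where
  "euler_input X0 W N dt i = (case i of None \<Rightarrow> X0
      | Some (False, k) \<Rightarrow> (\<lambda>\<omega>. W (real (Suc k) * dt) \<omega> - W (real k * dt) \<omega>)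
      | Some (True, k) \<Rightarrow> (\<lambda>\<omega>. N (real (Suc k) * dt) \<omega> - N (real k * dt) \<omega>))"

fun tamed_euler_map ::
  "real \<Rightarrow> real \<Rightarrow> real \<Rightarrow> real \<Rightarrow> ((bool \<times> nat) option \<Rightarrow> real) \<Rightarrow> nat \<Rightarrow> real" where
  "tamed_euler_map a b c dt v 0 = v None"
| "tamed_euler_map a b c dt v (Suc n) = (let x = tamed_euler_map a b c dt v n in
      x + a * x * dt / (1 + dt * \<bar>a * x\<bar>) + b * x * v (Some (False, n)) + c * x * v (Some (True, n)))"

definition input_indices :: "nat \<Rightarrow> (bool \<times> nat) option set" where
  "input_indices n = insert None {Some (b, k) | b k. k < n}"

lemma tamed_euler_eq_map:
  "tamed_euler a b c dt X0 W N n \<omega> = tamed_euler_map a b c dt (\<lambda>i. euler_input X0 W N dt i \<omega>) n"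
  by (induction n) (simp_all add: euler_input_def Let_def)

lemma tamed_euler_map_restrict:
  "input_indices n \<subseteq> J \<Longrightarrow> tamed_euler_map a b c dt (restrict v J) n = tamed_euler_map a b c dt v n"
proof (induction n)
  case (Suc n)
  then have "input_indices n \<subseteq> J" "Some (False, n) \<in> J" "Some (True, n) \<in> J"
    by (auto simp: input_indices_def)
  then show ?case using Suc.IH by (simp add: Let_def)
qed (simp add: input_indices_def)

lemma measurable_tamed_euler_map:
  "input_indices n \<subseteq> J \<Longrightarrow>
    (\<lambda>v. tamed_euler_map a b c dt v n) \<in> borel_measurable (PiM J (\<lambda>_. borel))"
proof (induction n)
  case 0
  then have "None \<in> J" by (simp add: input_indices_def)
  then show ?case by simp
next
  case (Suc n)
  then have "input_indices n \<subseteq> J" by (auto simp: input_indices_def)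
  note [measurable] = Suc.IH[OF this]
  have [measurable]: "Some (False, n) \<in> J" "Some (True, n) \<in> J"
    using Suc.prems by (auto simp: input_indices_def)
  show ?case by (simp add: Let_def) measurable
qed

lemma indep_vars_euler_input:
  assumes "prob_space M" and dt: "dt > 0" and ind: "indep_X0_W_N M X0 W N"
  shows "prob_space.indep_vars M (\<lambda>_. borel) (euler_input X0 W N dt) (input_indices (Suc n))"
proof -
  define ts where "ts = map (\<lambda>k. real k * dt) [0..<n+2]"
  have "sorted ts" "distinct ts" "\<forall>t\<in>set ts. 0 \<le> t"
    unfolding ts_def sorted_iff_nth_mono using dt
    by (auto simp del: upt_Suc simp: distinct_map inj_on_def intro!: mult_right_mono)
  then have grid: "prob_space.indep_vars M (\<lambda>_. borel)
      (\<lambda>i. case i of None \<Rightarrow> X0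
            | Some (False, k) \<Rightarrow> (\<lambda>\<omega>. W (ts ! Suc k) \<omega> - W (ts ! k) \<omega>)
            | Some (True, k) \<Rightarrow> (\<lambda>\<omega>. N (ts ! Suc k) \<omega> - N (ts ! k) \<omega>))
      (insert None {Some (b, k) | b k. Suc k < length ts})"
    using ind unfolding indep_X0_W_N_def by blast
  show ?thesis
  proof (rule prob_space.indep_vars_cong[OF \<open>prob_space M\<close>, THEN iffD1, OF _ _ _ grid])
    show "insert None {Some (b, k) | b k. Suc k < length ts} = input_indices (Suc n)"
      by (auto simp: ts_def input_indices_def)
    show "(case i of None \<Rightarrow> X0
            | Some (False, k) \<Rightarrow> (\<lambda>\<omega>. W (ts ! Suc k) \<omega> - W (ts ! k) \<omega>)
            | Some (True, k) \<Rightarrow> (\<lambda>\<omega>. N (ts ! Suc k) \<omega> - N (ts ! k) \<omega>))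
        = euler_input X0 W N dt i" if "i \<in> insert None {Some (b, k) | b k. Suc k < length ts}" for i
      using that by (cases i) (auto simp del: upt_Suc simp: euler_input_def ts_def split: bool.splits)
  qed simp
qed

text \<open>\<open>X\<^sub>n\<close> depends only on the inputs with index in \<^term>\<open>input_indices n\<close>, which are
  disjoint from those of \<open>\<Delta>W\<^sub>n\<close> and \<open>\<Delta>N\<^sub>n\<close>.\<close>

lemma (in prob_space) indep_var_tamed_euler_increments:
  fixes n :: nat
  assumes dt: "dt > 0" and ind: "indep_X0_W_N M X0 W N"
  defines "U \<equiv> \<lambda>\<omega>. W (real (Suc n) * dt) \<omega> - W (real n * dt) \<omega>"
    and "V \<equiv> \<lambda>\<omega>. N (real (Suc n) * dt) \<omega> - N (real n * dt) \<omega>"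
  shows "indep_var borel (tamed_euler a b c dt X0 W N n) borel (\<lambda>\<omega>. b * U \<omega> + c * V \<omega>)"
    and "indep_var borel U borel V"
proof -
  define F where "F = euler_input X0 W N dt"
  define K where "K = {Some (False, n), Some (True, n)}"
  have F: "indep_vars (\<lambda>_. borel) F (input_indices (Suc n))"
    unfolding F_def by (rule indep_vars_euler_input[OF prob_space_axioms dt ind])
  have [measurable]: "Some (False, n) \<in> K" "Some (True, n) \<in> K" by (auto simp: K_def)
  have FUV: "F (Some (False, n)) = U" "F (Some (True, n)) = V"
    by (simp_all add: F_def euler_input_def U_def V_def del: of_nat_Suc)
  have "indep_var borel ((\<lambda>v. tamed_euler_map a b c dt v n) \<circ> (\<lambda>\<omega>. restrict (\<lambda>i. F i \<omega>) (input_indices n)))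
      borel ((\<lambda>v. b * v (Some (False, n)) + c * v (Some (True, n))) \<circ> (\<lambda>\<omega>. restrict (\<lambda>i. F i \<omega>) K))"
    by (intro indep_var_compose[OF indep_var_restrict[OF F]] measurable_tamed_euler_map)
      (auto simp: input_indices_def K_def)
  moreover have "(\<lambda>\<omega>. tamed_euler_map a b c dt (\<lambda>i. F i \<omega>) n) = tamed_euler a b c dt X0 W N n"
    by (simp add: fun_eq_iff tamed_euler_eq_map F_def)
  ultimately show "indep_var borel (tamed_euler a b c dt X0 W N n) borel (\<lambda>\<omega>. b * U \<omega> + c * V \<omega>)"
    by (simp add: comp_def tamed_euler_map_restrict K_def FUV)
  have "indep_var borel ((\<lambda>v. v (Some (False, n))) \<circ> (\<lambda>\<omega>. restrict (\<lambda>i. F i \<omega>) {Some (False, n)}))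
      borel ((\<lambda>v. v (Some (True, n))) \<circ> (\<lambda>\<omega>. restrict (\<lambda>i. F i \<omega>) {Some (True, n)}))"
    by (intro indep_var_compose[OF indep_var_restrict[OF F]]) (auto simp: input_indices_def)
  then show "indep_var borel U borel V"
    by (simp add: comp_def FUV)
qed

definition amplification :: "real \<Rightarrow> real \<Rightarrow> real \<Rightarrow> real \<Rightarrow> real \<Rightarrow> real" where
  "amplification b c lam dt \<theta> = (1 + \<theta> + c * lam * dt)\<^sup>2 + b\<^sup>2 * dt + c\<^sup>2 * lam * dt"

lemma amplification_nonneg: "0 \<le> lam \<Longrightarrow> 0 \<le> dt \<Longrightarrow> 0 \<le> amplification b c lam dt \<theta>"
  unfolding amplification_def by simp

lemma amplification_scaled_le_max:
  assumes "0 \<le> t" "t \<le> 1"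
  shows "amplification b c lam dt (t * \<theta>)
    \<le> max (amplification b c lam dt 0) (amplification b c lam dt \<theta>)"
proof -
  have "amplification b c lam dt (t * \<theta>)
      = (1 - t) * amplification b c lam dt 0 + t * amplification b c lam dt \<theta> - t * (1 - t) * \<theta>\<^sup>2"
    unfolding amplification_def by (simp add: power2_eq_square algebra_simps)
  also have "\<dots> \<le> (1 - t) * amplification b c lam dt 0 + t * amplification b c lam dt \<theta>"
    using assms by simp
  also have "\<dots> \<le> (1 - t) * max (amplification b c lam dt 0) (amplification b c lam dt \<theta>)
      + t * max (amplification b c lam dt 0) (amplification b c lam dt \<theta>)"
    using assms by (intro add_mono mult_left_mono) auto
  finally show ?thesis by (simp add: algebra_simps)
qed

lemma amplification_0_eq:
  "amplification b c lam dt 0 = 1 + dt * (b\<^sup>2 + lam * c * (2 + c)) + (lam * c)\<^sup>2 * dt\<^sup>2"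
  unfolding amplification_def by (simp add: power2_eq_square algebra_simps)

lemma amplification_mult_eq:
  "amplification b c lam dt (a * dt) = 1 + dt * (2 * a + b\<^sup>2 + lam * c * (2 + c)) + (a + lam * c)\<^sup>2 * dt\<^sup>2"
  unfolding amplification_def by (simp add: power2_eq_square algebra_simps)

lemma amplification_lt_1_if_nonpos:
  fixes a b c lam dt :: real
  defines "l \<equiv> 2 * a + b\<^sup>2 + lam * c * (2 + c)"
  assumes dt: "dt > 0" and a_nonpos: "a * (1 + lam * c * dt) \<le> 0"
    and dt_lt: "dt < (2 * a - l) / (a\<^sup>2 + lam\<^sup>2 * c\<^sup>2)"
  shows "amplification b c lam dt 0 < 1" "amplification b c lam dt (a * dt) < 1"
proof -
  have "a\<^sup>2 + lam\<^sup>2 * c\<^sup>2 > 0"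
    using dt dt_lt by (cases "a\<^sup>2 + lam\<^sup>2 * c\<^sup>2 = 0") (simp_all add: add_nonneg_nonneg order_le_neq_trans)
  with dt_lt have bound: "dt * (dt * (a\<^sup>2 + lam\<^sup>2 * c\<^sup>2)) < dt * (2 * a - l)"
    using dt by (simp add: pos_less_divide_eq mult.commute)
  have "(lam * c)\<^sup>2 * dt\<^sup>2 \<le> a\<^sup>2 * dt\<^sup>2 + (lam * c)\<^sup>2 * dt\<^sup>2" by simp
  also have "\<dots> = dt * (dt * (a\<^sup>2 + lam\<^sup>2 * c\<^sup>2))" by (simp add: power2_eq_square algebra_simps)
  finally have "(lam * c)\<^sup>2 * dt\<^sup>2 \<le> dt * (dt * (a\<^sup>2 + lam\<^sup>2 * c\<^sup>2))" .
  with bound show "amplification b c lam dt 0 < 1"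
    unfolding amplification_0_eq l_def by (simp add: algebra_simps)
  have "(a + lam * c)\<^sup>2 * dt\<^sup>2 = dt * (dt * (a\<^sup>2 + lam\<^sup>2 * c\<^sup>2)) + 2 * dt * a * (lam * c * dt)"
    by (simp add: power2_eq_square algebra_simps)
  with bound have "dt * l + (a + lam * c)\<^sup>2 * dt\<^sup>2 < 2 * dt * (a * (1 + lam * c * dt))"
    by (simp add: algebra_simps)
  also have "\<dots> \<le> 0" using a_nonpos dt by (simp add: mult_nonneg_nonpos)
  finally show "amplification b c lam dt (a * dt) < 1"
    unfolding amplification_mult_eq l_def by simp
qed

lemma amplification_lt_1_if_pos:
  fixes a b c lam dt :: real
  defines "l \<equiv> 2 * a + b\<^sup>2 + lam * c * (2 + c)"
  assumes dt: "dt > 0" and a_pos: "a * (1 + lam * c * dt) > 0"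
    and dt_lt: "dt < - l / (a + lam * c)\<^sup>2"
  shows "amplification b c lam dt 0 < 1" "amplification b c lam dt (a * dt) < 1"
proof -
  have "(a + lam * c)\<^sup>2 > 0"
    using dt dt_lt by (cases "a + lam * c = 0") simp_all
  with dt_lt have "dt * (a + lam * c)\<^sup>2 < - l" by (simp only: pos_less_divide_eq)
  then have "dt * (dt * (a + lam * c)\<^sup>2) < dt * (- l)"
    by (rule mult_strict_left_mono[OF _ dt])
  then show R1_lt: "amplification b c lam dt (a * dt) < 1"
    unfolding amplification_mult_eq l_def by (simp add: power2_eq_square algebra_simps)
  have "0 < dt * (2 * (a * (1 + lam * c * dt)) + a\<^sup>2 * dt)"
    by (rule mult_pos_pos[OF dt add_pos_nonneg]) (use a_pos dt in simp_all)
  moreover have "amplification b c lam dt 0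
      = amplification b c lam dt (a * dt) - dt * (2 * (a * (1 + lam * c * dt)) + a\<^sup>2 * dt)"
    unfolding amplification_def by (simp add: power2_eq_square algebra_simps)
  ultimately show "amplification b c lam dt 0 < 1" using R1_lt by linarith
qed

lemma (in prob_space) tamed_euler_second_moment_step:
  fixes a b c lam dt :: real and X0 :: "'a \<Rightarrow> real" and W N :: "real \<Rightarrow> 'a \<Rightarrow> real"
  defines "X \<equiv> tamed_euler a b c dt X0 W N"
  assumes dt: "dt > 0" and lam: "lam > 0"
    and BM: "std_brownian_motion M W" and PP: "poisson_process M lam N"
    and [measurable]: "X0 \<in> borel_measurable M" and ind: "indep_X0_W_N M X0 W N"
    and X2: "integrable M (\<lambda>\<omega>. (X n \<omega>)\<^sup>2)"
  shows "integrable M (\<lambda>\<omega>. (X (Suc n) \<omega>)\<^sup>2)"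
    and "expectation (\<lambda>\<omega>. (X (Suc n) \<omega>)\<^sup>2)
      = expectation (\<lambda>\<omega>. (X n \<omega>)\<^sup>2 * amplification b c lam dt (a * dt / (1 + dt * \<bar>a * X n \<omega>\<bar>)))"
proof -
  have [measurable]: "W (real k * dt) \<in> borel_measurable M" "N (real k * dt) \<in> borel_measurable M" for k
    using BM PP dt unfolding std_brownian_motion_def poisson_process_def by auto
  define U where "U \<omega> = W (real (Suc n) * dt) \<omega> - W (real n * dt) \<omega>" for \<omega>
  define V where "V \<omega> = N (real (Suc n) * dt) \<omega> - N (real n * dt) \<omega>" for \<omega>
  define Z where "Z \<omega> = b * U \<omega> + c * V \<omega>" for \<omega>
  define g where "g x = 1 + a * dt / (1 + dt * \<bar>a * x\<bar>)" for x
  have V_meas: "V \<in> borel_measurable M" unfolding V_def by (simp del: of_nat_Suc)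
  have grid: "0 \<le> real n * dt" "real n * dt < real (Suc n) * dt" "real (Suc n) * dt - real n * dt = dt"
    using dt by (simp_all add: algebra_simps)
  have "distributed M lborel U (normal_density 0 (sqrt (real (Suc n) * dt - real n * dt)))"
    using BM grid(1,2) unfolding std_brownian_motion_def U_def by blast
  then have "distributed M lborel U (normal_density 0 (sqrt dt))" by (simp only: grid(3))
  note U = centered_normal_moments[OF real_sqrt_gt_zero[OF dt] this]
  have "distr M borel V = distr (measure_pmf (poisson_pmf (lam * (real (Suc n) * dt - real n * dt)))) borel real"
    using PP grid(1,2) unfolding poisson_process_def V_def by blast
  then have "distr M borel V = distr (measure_pmf (poisson_pmf (lam * dt))) borel real" by (simp only: grid(3))
  note V = poisson_moments[OF mult_pos_pos[OF lam dt] V_meas this]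
  have "indep_var borel U borel V"
    unfolding U_def V_def by (rule indep_var_tamed_euler_increments(2)[OF dt ind])
  note Z = moments_lincomb_indep[OF this U(1,3,2) V(1,3), of b c, folded Z_def]
  have indep: "indep_var borel (X n) borel Z"
    unfolding X_def Z_def U_def V_def by (rule indep_var_tamed_euler_increments(1)[OF dt ind])
  have g_bound: "\<bar>g x\<bar> \<le> 1 + \<bar>a\<bar> * dt" for x
  proof -
    have "\<bar>a * dt / (1 + dt * \<bar>a * x\<bar>)\<bar> = \<bar>a\<bar> * dt / (1 + dt * \<bar>a * x\<bar>)"
      using dt by (simp add: abs_mult)
    also have "\<dots> \<le> \<bar>a\<bar> * dt / 1"
      using dt by (intro frac_le) simp_all
    finally have "\<bar>a * dt / (1 + dt * \<bar>a * x\<bar>)\<bar> \<le> \<bar>a\<bar> * dt" by simp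
    then show ?thesis unfolding g_def by linarith
  qed
  have step: "X (Suc n) \<omega> = X n \<omega> * (g (X n \<omega>) + Z \<omega>)" for \<omega>
  proof -
    have "X (Suc n) \<omega> = X n \<omega> + X n \<omega> * (a * dt / (1 + dt * \<bar>a * X n \<omega>\<bar>))
        + X n \<omega> * (b * U \<omega>) + X n \<omega> * (c * V \<omega>)"
      unfolding X_def U_def V_def by (simp only: tamed_euler.simps Let_def) (simp add: mult_ac)
    then show ?thesis unfolding g_def Z_def by (simp add: distrib_left)
  qed
  have amplification_expand: "(1 + \<theta>)\<^sup>2 + 2 * (1 + \<theta>) * (c * (lam * dt))
      + (b\<^sup>2 * dt + c\<^sup>2 * (lam * dt + (lam * dt)\<^sup>2)) = amplification b c lam dt \<theta>" for \<theta>
    unfolding amplification_def by (simp add: power2_eq_square algebra_simps)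
  have g_meas: "g \<in> borel_measurable borel" unfolding g_def by measurable
  note moment = second_moment_mult_indep[where g = g, OF indep g_meas g_bound X2 Z(1,3),
      unfolded step[symmetric] Z(2,4) U(4) V(2,4)]
  show "integrable M (\<lambda>\<omega>. (X (Suc n) \<omega>)\<^sup>2)" by (fact moment(1))
  show "expectation (\<lambda>\<omega>. (X (Suc n) \<omega>)\<^sup>2)
      = expectation (\<lambda>\<omega>. (X n \<omega>)\<^sup>2 * amplification b c lam dt (a * dt / (1 + dt * \<bar>a * X n \<omega>\<bar>)))"
    unfolding moment(2) g_def real_sqrt_pow2[OF less_imp_le[OF dt]] amplification_expand ..
qed

lemma (in prob_space) tamed_euler_second_moment_le:
  fixes a b c lam dt :: real and X0 :: "'a \<Rightarrow> real" and W N :: "real \<Rightarrow> 'a \<Rightarrow> real"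
  defines "X \<equiv> tamed_euler a b c dt X0 W N"
    and "\<rho> \<equiv> max (amplification b c lam dt 0) (amplification b c lam dt (a * dt))"
  assumes dt: "dt > 0" and lam: "lam > 0"
    and BM: "std_brownian_motion M W" and PP: "poisson_process M lam N"
    and X0: "X0 \<in> borel_measurable M" "integrable M (\<lambda>\<omega>. (X0 \<omega>)\<^sup>2)"
    and ind: "indep_X0_W_N M X0 W N"
  shows "integrable M (\<lambda>\<omega>. (X n \<omega>)\<^sup>2) \<and>
    expectation (\<lambda>\<omega>. (X n \<omega>)\<^sup>2) \<le> \<rho> ^ n * expectation (\<lambda>\<omega>. (X0 \<omega>)\<^sup>2)"
proof (induction n)
  case 0
  show ?case using X0(2) by (simp add: X_def)
next
  case (Suc n)
  then have X2: "integrable M (\<lambda>\<omega>. (X n \<omega>)\<^sup>2)" by simp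
  note step = tamed_euler_second_moment_step[OF dt lam BM PP X0(1) ind X2[unfolded X_def], folded X_def]
  have \<rho>_nonneg: "0 \<le> \<rho>"
    using dt lam by (simp add: \<rho>_def amplification_nonneg le_max_iff_disj)
  have factor_le: "amplification b c lam dt (a * dt / (1 + dt * \<bar>a * x\<bar>)) \<le> \<rho>" for x
  proof -
    have "1 \<le> 1 + dt * \<bar>a * x\<bar>" using dt by simp
    then have "0 \<le> 1 / (1 + dt * \<bar>a * x\<bar>)" "1 / (1 + dt * \<bar>a * x\<bar>) \<le> 1" by simp_all
    from amplification_scaled_le_max[OF this, of b c lam dt "a * dt"] show ?thesis
      unfolding \<rho>_def by simp
  qed
  have "expectation (\<lambda>\<omega>. (X (Suc n) \<omega>)\<^sup>2) \<le> expectation (\<lambda>\<omega>. (X n \<omega>)\<^sup>2 * \<rho>)"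
    unfolding step(2) using X2 \<rho>_nonneg by (intro integral_mono' mult_left_mono factor_le) simp_all
  also have "\<dots> = \<rho> * expectation (\<lambda>\<omega>. (X n \<omega>)\<^sup>2)" by simp
  also have "\<dots> \<le> \<rho> * (\<rho> ^ n * expectation (\<lambda>\<omega>. (X0 \<omega>)\<^sup>2))"
    using Suc \<rho>_nonneg by (simp add: mult_left_mono)
  finally show ?case using step(1) by simp
qed

theorem mainTheorem2:
  fixes M :: "'a measure" and a b c lam dt :: real
    and X0 :: "'a \<Rightarrow> real" and W N :: "real \<Rightarrow> 'a \<Rightarrow> real"
  assumes "prob_space M"
    and "lam > 0" and "dt > 0"
    and "std_brownian_motion M W"
    and "poisson_process M lam N"
    and "X0 \<in> borel_measurable M"
    and "integrable M (\<lambda>\<omega>. (X0 \<omega>)\<^sup>2)"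
    and "indep_X0_W_N M X0 W N"
    and "2 * a + b\<^sup>2 + lam * c * (2 + c) < 0"
    and "(a * (1 + lam * c * dt) \<le> 0 \<and>
          2 * a - (2 * a + b\<^sup>2 + lam * c * (2 + c)) > 0 \<and>
          dt < (2 * a - (2 * a + b\<^sup>2 + lam * c * (2 + c))) / (a\<^sup>2 + lam\<^sup>2 * c\<^sup>2))
       \<or> (a * (1 + lam * c * dt) > 0 \<and>
          dt < - (2 * a + b\<^sup>2 + lam * c * (2 + c)) / (a + lam * c)\<^sup>2)"
  shows "(\<lambda>n. integral\<^sup>L M (\<lambda>\<omega>. (tamed_euler a b c dt X0 W N n \<omega>)\<^sup>2)) \<longlonglongrightarrow> 0"
proof -
  interpret prob_space M by fact
  define \<rho> where "\<rho> = max (amplification b c lam dt 0) (amplification b c lam dt (a * dt))"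
  have "\<rho> < 1"
    using assms(10) amplification_lt_1_if_nonpos[OF assms(3)] amplification_lt_1_if_pos[OF assms(3)]
    by (auto simp: \<rho>_def)
  moreover have "0 \<le> \<rho>" using assms(2,3) by (simp add: \<rho>_def amplification_nonneg le_max_iff_disj)
  ultimately have decay: "(\<lambda>n. \<rho> ^ n * expectation (\<lambda>\<omega>. (X0 \<omega>)\<^sup>2)) \<longlonglongrightarrow> 0"
    by (intro tendsto_mult_left_zero LIMSEQ_power_zero) simp
  note bound = tamed_euler_second_moment_le[where a = a and b = b and c = c, OF assms(3,2,4-8),
      folded \<rho>_def]
  show ?thesis
  proof (rule tendsto_sandwich[OF _ _ tendsto_const decay])
    show "\<forall>\<^sub>F n in sequentially. 0 \<le> expectation (\<lambda>\<omega>. (tamed_euler a b c dt X0 W N n \<omega>)\<^sup>2)"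
      by (simp add: always_eventually)
    show "\<forall>\<^sub>F n in sequentially. expectation (\<lambda>\<omega>. (tamed_euler a b c dt X0 W N n \<omega>)\<^sup>2)
        \<le> \<rho> ^ n * expectation (\<lambda>\<omega>. (X0 \<omega>)\<^sup>2)"
      using bound by (simp add: always_eventually)
  qed
qed

end
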